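(* In the SLAR setting, let $(w^{(t)})_{t\ge0}$ be the sequence produced by adversarial training. Then for all $t>0$, $$\|w^{(t+1)}-w^{(t)}\|_2^2\ge\sum_{i:\,|\mu_i|<\varepsilon}(w_i^{(t)})^2.$$
   Context: SLAR setting: $(x,y)$ is drawn from a distribution $\mathcal D$ on $\mathbb R^d\times\{-1,+1\}$, $x=(x_1,\dots,x_d)$ with finite second moments, such that (A1) for each $i$ there is a constant $\mu_i$ with $\mathbb E[x_i\mid y]=y\mu_i$ for $y\in\{-1,1\}$, and (A2) the coordinates $x_1,\dots,x_d$ are mutually independent conditionally on $y$. Fix $\lambda>0$ and a perturbation budget $\varepsilon>0$; $\mathcal B(\varepsilon)=\{a\in\mathbb R^d:\|a\|_\infty\le\varepsilon\}$. A perturbation function is a measurable map $\delta$ assigning to each $(x,y)$ a vector $\delta(x,y)\in\mathcal B(\varepsilon)$. For a perturbation function $\delta$ and $w\in\mathbb R^d$ let $U(\delta,w)=\mathbb E_{(x,y)\sim\mathcal D}[\max(0,1-yw^\top(x+\delta(x,y)))]+\frac{\lambda}{2}\|w\|_2^2$. $\operatorname{sign}$ is coordinatewise with $\operatorname{sign}(0)=0$. Adversarial training (AT): from an arbitrary $w^{(0)}\in\mathbb R^d$, for $t\ge1$ set $\delta^{(t)}(x,y)=-y\varepsilon\operatorname{sign}(w^{(t-1)})$ and $w^{(t)}=\arg\min_{w\in\mathbb R^d}U(\delta^{(t)},w)$ (this minimizer is unique). *)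

theory Defs
  imports "HOL-Probability.Probability"
begin

definition linf_ball :: "real \<Rightarrow> (real^'d) set" where
  "linf_ball eps = {a. \<forall>i. \<bar>a $ i\<bar> \<le> eps}"

definition perturbation_fun ::
  "((real^'d) \<times> real) measure \<Rightarrow> real \<Rightarrow> ((real^'d) \<times> real \<Rightarrow> real^'d) \<Rightarrow> bool" where
  "perturbation_fun D eps delta \<longleftrightarrow>
     delta \<in> borel_measurable D \<and> (\<forall>p\<in>space D. delta p \<in> linf_ball eps)"

definition U_obj ::
  "((real^'d) \<times> real) measure \<Rightarrow> real \<Rightarrow> ((real^'d) \<times> real \<Rightarrow> real^'d) \<Rightarrow> real^'d \<Rightarrow> real" where
  "U_obj D lam delta w =
     (\<integral>p. max 0 (1 - snd p * (w \<bullet> (fst p + delta p))) \<partial>D) + lam / 2 * (norm w)\<^sup>2"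

definition AT_delta :: "real \<Rightarrow> real^'d \<Rightarrow> ((real^'d) \<times> real \<Rightarrow> real^'d)" where
  "AT_delta eps w = (\<lambda>p. \<chi> i. - snd p * eps * sgn (w $ i))"

definition label_event :: "((real^'d) \<times> real) measure \<Rightarrow> real \<Rightarrow> ((real^'d) \<times> real) set" where
  "label_event D c = {p \<in> space D. snd p = c}"

end

theory Submission
  imports Defs
begin

text \<open>
  Let \<open>v\<close> minimise \<open>U(\<delta>, \<cdot>)\<close> for the perturbation \<open>\<delta> = -y \<epsilon> sign W\<close> and suppose
  \<open>v\<^sub>i W\<^sub>i > 0\<close> for a coordinate with \<open>|\<mu>\<^sub>i| < \<epsilon>\<close>. Setting \<open>v\<^sub>i\<close> to zero lowers the regulariser
  by \<open>\<lambda> v\<^sub>i\<^sup>2 / 2\<close>. By convexity of the hinge, the hinge loss of \<open>v\<close> exceeds that of the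
  modified vector by at least \<open>[B > 0] (|v\<^sub>i| \<epsilon> - v\<^sub>i y x\<^sub>i)\<close>, where the margin \<open>B\<close> only involves
  the other coordinates. Given the label, those coordinates are independent of \<open>x\<^sub>i\<close>, so this
  gain has expectation \<open>P(B > 0 | y) (|v\<^sub>i| \<epsilon> - v\<^sub>i \<mu>\<^sub>i) \<ge> 0\<close>, contradicting minimality.
  Hence consecutive iterates have coordinates of opposite sign (or zero) wherever
  \<open>|\<mu>\<^sub>i| < \<epsilon>\<close>, and there the squared step is at least the squared old coordinate.
\<close>

lemma uniform_measure_eq_density:
  assumes "finite_measure M" "A \<in> sets M" "measure M A > 0"
  shows "uniform_measure M A = density M (\<lambda>x. ennreal (indicator A x / measure M A))"
proof -
  have "emeasure M A = ennreal (measure M A)"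
    using assms by (simp add: finite_measure.emeasure_eq_measure)
  then show ?thesis
    unfolding uniform_measure_def using assms(3)
    by (intro arg_cong[where f="density M"] ext)
       (auto simp: divide_ennreal[of 1, simplified] indicator_def)
qed

lemma
  fixes f :: "'a \<Rightarrow> real"
  assumes M: "finite_measure M" and A: "A \<in> sets M" "measure M A > 0"
    and f: "f \<in> borel_measurable M"
  shows integral_uniform_measure:
      "(\<integral>x. f x \<partial>uniform_measure M A) = (\<integral>x. indicator A x * f x \<partial>M) / measure M A"
    and integrable_uniform_measure:
      "integrable M f \<Longrightarrow> integrable (uniform_measure M A) f"
proof -
  have m: "(\<lambda>x. indicator A x / measure M A) \<in> borel_measurable M" using A by measurable
  have nn: "AE x in M. 0 \<le> indicator A x / measure M A" using A by auto
  note density = uniform_measure_eq_density[OF M A]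
  show "(\<integral>x. f x \<partial>uniform_measure M A) = (\<integral>x. indicator A x * f x \<partial>M) / measure M A"
    unfolding density integral_real_density[OF m nn f] by (simp add: mult.commute)
  assume "integrable M f"
  then have "integrable M (\<lambda>x. (1 / measure M A) * (indicator A x * f x))"
    using integrable_real_mult_indicator[OF A(1)] by (intro integrable_mult_right) (simp add: mult.commute)
  then have "integrable M (\<lambda>x. indicator A x / measure M A * f x)"
    by (simp add: mult.commute)
  then show "integrable (uniform_measure M A) f"
    unfolding density integrable_real_density[OF m nn f] by simp
qed

lemma
  fixes D :: "((real^'d) \<times> real) measure"
  assumes "sets D = sets borel"
  shows borel_measurable_coordinate: "(\<lambda>p. fst p $ j) \<in> borel_measurable D"
    and borel_measurable_label: "snd \<in> borel_measurable D"
  unfolding measurable_cong_sets[OF assms refl]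
  by (intro borel_measurable_continuous_onI continuous_intros)+

lemma label_event_in_sets:
  assumes "snd \<in> borel_measurable D"
  shows "label_event D c \<in> sets D"
proof -
  have "snd -` {c} \<inter> space D \<in> sets D" using measurable_sets[OF assms] by auto
  moreover have "snd -` {c} \<inter> space D = label_event D c" by (auto simp: label_event_def)
  ultimately show ?thesis by simp
qed

lemma integral_nonneg_by_label:
  fixes D :: "((real^'d) \<times> real) measure" and Z :: "(real^'d) \<times> real \<Rightarrow> real"
  assumes D: "prob_space D" and snd: "snd \<in> borel_measurable D"
    and labels: "AE p in D. snd p \<in> {-1, 1}"
    and Z: "integrable D Z"
    and given_label: "\<And>c. c \<in> {-1,1} \<Longrightarrow> measure D (label_event D c) > 0 \<Longrightarrow>
                (\<integral>p. Z p \<partial>uniform_measure D (label_event D c)) \<ge> 0"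
  shows "(\<integral>p. Z p \<partial>D) \<ge> 0"
proof -
  interpret prob_space D by (rule D)
  note L[measurable] = label_event_in_sets[OF snd]
  note [measurable] = borel_measurable_integrable[OF Z]
  have part: "0 \<le> (\<integral>p. indicator (label_event D c) p * Z p \<partial>D)" if c: "c \<in> {-1,1}" for c
  proof (cases "measure D (label_event D c) > 0")
    case True
    have "(\<integral>p. Z p \<partial>uniform_measure D (label_event D c))
          = (\<integral>p. indicator (label_event D c) p * Z p \<partial>D) / measure D (label_event D c)"
      using Z by (intro integral_uniform_measure[OF finite_measure_axioms L True]) auto
    with given_label[OF c True] True show ?thesis
      by (simp add: zero_le_divide_iff)
  next
    case False
    then have "label_event D c \<in> null_sets D"
      using L measure_nonneg[of D "label_event D c"] by (simp add: emeasure_eq_measure null_sets_def)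
    then have "AE p in D. indicator (label_event D c) p * Z p = 0"
      by (rule AE_mp[OF AE_not_in]) auto
    then show ?thesis by (simp add: integral_eq_zero_AE)
  qed
  have integrable_part: "integrable D (\<lambda>p. indicator (label_event D c) p * Z p)" for c
    using integrable_real_mult_indicator[OF L Z] by (simp add: mult.commute)
  have "AE p in D. Z p = indicator (label_event D 1) p * Z p + indicator (label_event D (-1)) p * Z p"
    using labels AE_space by eventually_elim (auto simp: label_event_def indicator_def)
  then have "(\<integral>p. Z p \<partial>D) = (\<integral>p. indicator (label_event D 1) p * Z p
                                  + indicator (label_event D (-1)) p * Z p \<partial>D)"
    by (intro integral_cong_AE) measurable
  also have "\<dots> = (\<integral>p. indicator (label_event D 1) p * Z p \<partial>D)
                    + (\<integral>p. indicator (label_event D (-1)) p * Z p \<partial>D)"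
    by (rule Bochner_Integration.integral_add[OF integrable_part integrable_part])
  finally show ?thesis using part[of 1] part[of "-1"] by simp
qed

lemma (in prob_space)
  fixes X :: "'i \<Rightarrow> 'a \<Rightarrow> real" and h :: "('i \<Rightarrow> real) \<Rightarrow> real"
  assumes indep: "indep_vars (\<lambda>_. borel) X I" and i: "i \<in> I"
    and Xi: "integrable M (X i)"
    and h: "h \<in> borel_measurable (PiM (I - {i}) (\<lambda>_. borel))" and h_bound: "\<And>r. \<bar>h r\<bar> \<le> B"
  shows integral_mult_indep_component:
      "(\<integral>x. X i x * h (restrict (\<lambda>j. X j x) (I - {i})) \<partial>M)
        = (\<integral>x. X i x \<partial>M) * (\<integral>x. h (restrict (\<lambda>j. X j x) (I - {i})) \<partial>M)"
    and integrable_mult_indep_component: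
      "integrable M (\<lambda>x. X i x * h (restrict (\<lambda>j. X j x) (I - {i})))"
    and integrable_indep_component_bounded:
      "integrable M (\<lambda>x. h (restrict (\<lambda>j. X j x) (I - {i})))"
proof -
  have restrict: "indep_var (PiM {i} (\<lambda>_. borel)) (\<lambda>x. restrict (\<lambda>j. X j x) {i})
          (PiM (I - {i}) (\<lambda>_. borel)) (\<lambda>x. restrict (\<lambda>j. X j x) (I - {i}))"
    by (rule indep_var_restrict[OF indep]) (use i in auto)
  have "(\<lambda>r. r i) \<in> borel_measurable (PiM {i} (\<lambda>_. borel :: real measure))"
    by (rule measurable_component_singleton) simp
  from indep_var_compose[OF restrict this h]
  have indep_h: "indep_var borel (X i) borel (\<lambda>x. h (restrict (\<lambda>j. X j x) (I - {i})))"
    by (simp add: comp_def)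
  show integrable_h: "integrable M (\<lambda>x. h (restrict (\<lambda>j. X j x) (I - {i})))"
    using indep_h h_bound by (intro integrable_const_bound[where B=B]) (auto simp: indep_var_rv2)
  show "(\<integral>x. X i x * h (restrict (\<lambda>j. X j x) (I - {i})) \<partial>M)
        = (\<integral>x. X i x \<partial>M) * (\<integral>x. h (restrict (\<lambda>j. X j x) (I - {i})) \<partial>M)"
    by (rule indep_var_lebesgue_integral[OF indep_h Xi integrable_h])
  show "integrable M (\<lambda>x. X i x * h (restrict (\<lambda>j. X j x) (I - {i})))"
    by (rule indep_var_integrable[OF indep_h Xi integrable_h])
qed

lemma integral_hinge_gain_nonneg:
  fixes N :: "((real^'d) \<times> real) measure" and v :: "'d \<Rightarrow> real"
  assumes N: "prob_space N" and sets_N: "sets N = sets borel"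
    and c: "c \<in> {-1, 1}" and label: "AE p in N. snd p = c"
    and indep: "prob_space.indep_vars N (\<lambda>_. borel) (\<lambda>j p. fst p $ j) UNIV"
    and xi: "integrable N (\<lambda>p. fst p $ i)" and mean: "(\<integral>p. fst p $ i \<partial>N) = c * m"
    and bm_le: "b * m \<le> e"
  shows "0 \<le> (\<integral>p. (if 0 < 1 - snd p * (\<Sum>j\<in>UNIV - {i}. v j * fst p $ j) + k
                      then e - b * snd p * fst p $ i else 0) \<partial>N)"
proof -
  interpret prob_space N by (rule N)
  note [measurable] = borel_measurable_coordinate[OF sets_N] borel_measurable_label[OF sets_N]
  define h where "h r = (if 0 < 1 - c * (\<Sum>j\<in>UNIV - {i}. v j * r j) + k then 1 else 0 :: real)"
    for r :: "'d \<Rightarrow> real"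
  define G where "G p = h (restrict (\<lambda>j. fst p $ j) (UNIV - {i}))" for p :: "(real^'d) \<times> real"
  have h_meas: "h \<in> borel_measurable (PiM (UNIV - {i}) (\<lambda>_. borel))"
    unfolding h_def by measurable
  have h_bound: "\<bar>h r\<bar> \<le> 1" for r
    by (simp add: h_def)
  note G_facts = integral_mult_indep_component[OF indep _ xi h_meas h_bound, folded G_def]
    integrable_mult_indep_component[OF indep _ xi h_meas h_bound, folded G_def]
    integrable_indep_component_bounded[OF indep _ xi h_meas h_bound, folded G_def]
  have [measurable]: "G \<in> borel_measurable N"
    using G_facts(3) by auto
  \<comment> \<open>given the label, the indicator is a function of the coordinates other than \<open>i\<close>\<close>
  have "AE p in N. (if 0 < 1 - snd p * (\<Sum>j\<in>UNIV - {i}. v j * fst p $ j) + k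
                    then e - b * snd p * fst p $ i else 0) = e * G p - (b * c) * (fst p $ i * G p)"
    using label by eventually_elim (simp add: G_def h_def)
  then have "(\<integral>p. (if 0 < 1 - snd p * (\<Sum>j\<in>UNIV - {i}. v j * fst p $ j) + k
                   then e - b * snd p * fst p $ i else 0) \<partial>N)
             = (\<integral>p. e * G p - (b * c) * (fst p $ i * G p) \<partial>N)"
    by (intro integral_cong_AE) measurable
  also have "\<dots> = e * (\<integral>p. G p \<partial>N) - (b * c) * (c * m) * (\<integral>p. G p \<partial>N)"
    using G_facts mean by simp
  also have "\<dots> = (e - b * m) * (\<integral>p. G p \<partial>N)"
    using c by (auto simp: algebra_simps)
  finally show ?thesis
    using bm_le by (simp add: G_def h_def integral_nonneg)
qed

lemma inner_add_AT_delta: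
  "u \<bullet> (fst p + AT_delta eps W p)
     = (\<Sum>j\<in>UNIV. u $ j * fst p $ j) - snd p * eps * (\<Sum>j\<in>UNIV. u $ j * sgn (W $ j))"
  unfolding AT_delta_def inner_vec_def
  by (simp add: algebra_simps sum_subtractf sum_distrib_left)

lemma power2_norm_vec: "(norm (x :: real^'d))\<^sup>2 = (\<Sum>j\<in>UNIV. (x $ j)\<^sup>2)"
  unfolding power2_norm_eq_inner inner_vec_def by (simp add: power2_eq_square)

lemma integrable_AT_hinge:
  fixes D :: "((real^'d) \<times> real) measure"
  assumes D: "finite_measure D" and sets_D: "sets D = sets borel"
    and labels: "AE p in D. snd p \<in> {-1, 1}"
    and coordinates: "\<And>j. integrable D (\<lambda>p. fst p $ j)"
  shows "integrable D (\<lambda>p. max 0 (1 - snd p * (u \<bullet> (fst p + AT_delta eps W p))))"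
proof (rule Bochner_Integration.integrable_bound)
  interpret finite_measure D by (rule D)
  define k where "k = (\<Sum>j\<in>UNIV. u $ j * sgn (W $ j))"
  note [measurable] = borel_measurable_coordinate[OF sets_D] borel_measurable_label[OF sets_D]
  show "integrable D (\<lambda>p. 1 + (\<Sum>j\<in>UNIV. \<bar>u $ j\<bar> * \<bar>fst p $ j\<bar>) + \<bar>eps * k\<bar>)"
    using coordinates by (intro Bochner_Integration.integrable_add integrable_sum
        integrable_mult_right integrable_abs) auto
  show "(\<lambda>p. max 0 (1 - snd p * (u \<bullet> (fst p + AT_delta eps W p)))) \<in> borel_measurable D"
    unfolding inner_add_AT_delta by measurable
  show "AE p in D. norm (max 0 (1 - snd p * (u \<bullet> (fst p + AT_delta eps W p))))
                   \<le> norm (1 + (\<Sum>j\<in>UNIV. \<bar>u $ j\<bar> * \<bar>fst p $ j\<bar>) + \<bar>eps * k\<bar>)"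
    using labels
  proof eventually_elim
    case (elim p)
    have "\<bar>\<Sum>j\<in>UNIV. u $ j * fst p $ j\<bar> \<le> (\<Sum>j\<in>UNIV. \<bar>u $ j\<bar> * \<bar>fst p $ j\<bar>)"
      by (rule order_trans[OF sum_abs]) (simp add: abs_mult)
    with elim abs_ge_self[of "eps * k"] show ?case
      unfolding inner_add_AT_delta k_def[symmetric] by (auto simp: abs_le_iff)
  qed
qed

lemma
  fixes v :: "real^'d"
  shows sum_coordinates_remove:
      "(\<Sum>j\<in>UNIV. v $ j * f j) = (\<Sum>j\<in>UNIV - {i}. v $ j * f j) + v $ i * f i"
    and sum_coordinates_zero_component:
      "(\<Sum>j\<in>UNIV. (\<chi> k. if k = i then 0 else v $ k) $ j * f j) = (\<Sum>j\<in>UNIV - {i}. v $ j * f j)"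
  by (simp_all add: sum.remove[of UNIV i] add.commute)

lemma power2_norm_zero_component:
  fixes v :: "real^'d"
  shows "(norm v)\<^sup>2 = (norm (\<chi> k. if k = i then 0 else v $ k))\<^sup>2 + (v $ i)\<^sup>2"
  unfolding power2_norm_vec by (simp add: sum.remove[of UNIV i])

lemma AT_minimizer_coordinate_sign:
  fixes D :: "((real^'d) \<times> real) measure"
    and \<mu> :: "'d \<Rightarrow> real" and lam eps :: real and W v :: "real^'d"
  assumes prob: "prob_space D"
    and sets_D: "sets D = sets borel"
    and labels: "AE p in D. snd p \<in> {-1, 1}"
    and second_moments: "\<And>i. integrable D (\<lambda>p. (fst p $ i)\<^sup>2)"
    and A1: "\<And>i c. c \<in> {-1, 1} \<Longrightarrow> measure D (label_event D c) > 0 \<Longrightarrow>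
               (\<integral>p. fst p $ i \<partial>(uniform_measure D (label_event D c))) = c * \<mu> i"
    and A2: "\<And>c. c \<in> {-1, 1} \<Longrightarrow> measure D (label_event D c) > 0 \<Longrightarrow>
               prob_space.indep_vars (uniform_measure D (label_event D c))
                 (\<lambda>_. borel) (\<lambda>i p. fst p $ i) UNIV"
    and lam_pos: "lam > 0"
    and minimizer: "\<And>u. U_obj D lam (AT_delta eps W) v \<le> U_obj D lam (AT_delta eps W) u"
    and mu_small: "\<bar>\<mu> i\<bar> < eps"
  shows "v $ i * W $ i \<le> 0"
proof (rule ccontr)
  assume "\<not> v $ i * W $ i \<le> 0"
  interpret prob_space D by (rule prob)
  note [measurable] = borel_measurable_coordinate[OF sets_D] borel_measurable_label[OF sets_D]
  define a where "a = v $ i"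
  define v' where "v' = (\<chi> k. if k = i then 0 else v $ k)"
  define K where "K = (\<Sum>j\<in>UNIV - {i}. v $ j * sgn (W $ j))"
  define hinge where "hinge u p = max 0 (1 - snd p * (u \<bullet> (fst p + AT_delta eps W p)))"
    for u :: "real^'d" and p :: "(real^'d) \<times> real"
  define B where "B p = 1 - snd p * (\<Sum>j\<in>UNIV - {i}. v $ j * fst p $ j) + eps * K" for p
  define Z where "Z p = (if 0 < B p then \<bar>a\<bar> * eps - a * snd p * fst p $ i else 0)" for p
  have a_sgn: "a * sgn (W $ i) = \<bar>a\<bar>" and a_nz: "a \<noteq> 0"
    using \<open>\<not> v $ i * W $ i \<le> 0\<close> by (auto simp: a_def sgn_if zero_less_mult_iff not_le)
  have coordinates: "integrable D (\<lambda>p. fst p $ j)" for j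
    by (rule square_integrable_imp_integrable[OF _ second_moments]) measurable
  have hinge_integrable: "integrable D (hinge u)" for u
    unfolding hinge_def using finite_measure_axioms sets_D labels coordinates
    by (rule integrable_AT_hinge)
  \<comment> \<open>\<open>max 0 (B + d) \<ge> max 0 B + [B > 0] d\<close>, with \<open>d\<close> the contribution of coordinate \<open>i\<close>\<close>
  have gain: "AE p in D. hinge v' p + Z p \<le> hinge v p"
    using labels
  proof eventually_elim
    case (elim p)
    then have y: "snd p * (snd p * t) = t" for t by auto
    then have "hinge v p = max 0 (B p + (\<bar>a\<bar> * eps - a * snd p * fst p $ i))"
        and "hinge v' p = max 0 (B p)"
      unfolding hinge_def inner_add_AT_delta B_def K_def v'_def sum_coordinates_zero_component
        sum_coordinates_remove[where i=i] a_def[symmetric] a_sgn[symmetric]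
      by (simp_all add: algebra_simps y)
    then show ?case by (auto simp: Z_def)
  qed
  have Z_integrable: "integrable D Z"
  proof (rule Bochner_Integration.integrable_bound)
    show "integrable D (\<lambda>p. \<bar>a\<bar> * eps + \<bar>a\<bar> * \<bar>fst p $ i\<bar>)"
      using coordinates by (intro Bochner_Integration.integrable_add integrable_mult_right integrable_abs) auto
    show "Z \<in> borel_measurable D" unfolding Z_def B_def by measurable
    show "AE p in D. norm (Z p) \<le> norm (\<bar>a\<bar> * eps + \<bar>a\<bar> * \<bar>fst p $ i\<bar>)"
      using labels
    proof eventually_elim
      case (elim p)
      have "0 < eps" using mu_small by linarith
      with elim abs_triangle_ineq[of "\<bar>a\<bar> * eps" "a * fst p $ i"]
        abs_triangle_ineq4[of "\<bar>a\<bar> * eps" "a * fst p $ i"]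
      show ?case by (auto simp: Z_def abs_mult)
    qed
  qed
  have "0 \<le> (\<integral>p. Z p \<partial>D)"
  proof (rule integral_nonneg_by_label[OF prob borel_measurable_label[OF sets_D] labels Z_integrable])
    fix c :: real assume c: "c \<in> {-1, 1}" and pos: "0 < measure D (label_event D c)"
    let ?N = "uniform_measure D (label_event D c)"
    note L = label_event_in_sets[OF borel_measurable_label[OF sets_D]]
    have "a * \<mu> i \<le> \<bar>a\<bar> * \<bar>\<mu> i\<bar>" by (simp add: abs_mult[symmetric])
    also have "\<dots> \<le> \<bar>a\<bar> * eps" using mu_small by (intro mult_left_mono) auto
    finally have mean_bound: "a * \<mu> i \<le> \<bar>a\<bar> * eps" .
    show "0 \<le> (\<integral>p. Z p \<partial>?N)"
      unfolding Z_def B_def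
    proof (rule integral_hinge_gain_nonneg[where c=c, OF _ _ c _ A2[OF c pos] _ A1[OF c pos] mean_bound])
      show "prob_space ?N"
        using pos L by (intro prob_space_uniform_measure) (auto simp: emeasure_eq_measure)
      show "sets ?N = sets borel" using sets_D by simp
      show "AE p in ?N. snd p = c"
        by (rule AE_uniform_measureI[OF L]) (auto simp: label_event_def)
      show "integrable ?N (\<lambda>p. fst p $ i)"
        by (rule integrable_uniform_measure[OF finite_measure_axioms L pos _ coordinates]) measurable
    qed
  qed
  then have hinge_le: "(\<integral>p. hinge v' p \<partial>D) \<le> (\<integral>p. hinge v p \<partial>D)"
    using integral_mono_AE[OF _ hinge_integrable gain] Z_integrable hinge_integrable by simp
  have "(norm v)\<^sup>2 = (norm v')\<^sup>2 + a\<^sup>2"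
    unfolding v'_def a_def by (rule power2_norm_zero_component)
  moreover have "0 < lam * a\<^sup>2" using lam_pos a_nz by simp
  ultimately have "U_obj D lam (AT_delta eps W) v' < U_obj D lam (AT_delta eps W) v"
    unfolding U_obj_def hinge_def[symmetric] using hinge_le by (simp add: algebra_simps)
  with minimizer[of v'] show False by simp
qed

lemma sum_power2_le_norm_diff_if_opposite_signs:
  fixes u w :: "real^'d"
  assumes "\<And>i. i \<in> S \<Longrightarrow> u $ i * w $ i \<le> 0"
  shows "(\<Sum>i\<in>S. (w $ i)\<^sup>2) \<le> (norm (u - w))\<^sup>2"
proof -
  have "(\<Sum>i\<in>S. (w $ i)\<^sup>2) \<le> (\<Sum>i\<in>S. (u $ i - w $ i)\<^sup>2)"
  proof (rule sum_mono)
    fix i assume "i \<in> S"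
    have "(u $ i - w $ i)\<^sup>2 = (u $ i)\<^sup>2 - 2 * (u $ i * w $ i) + (w $ i)\<^sup>2"
      by (simp add: power2_diff)
    with assms[OF \<open>i \<in> S\<close>] show "(w $ i)\<^sup>2 \<le> (u $ i - w $ i)\<^sup>2"
      using zero_le_power2[of "u $ i"] by linarith
  qed
  also have "\<dots> \<le> (\<Sum>i\<in>UNIV. (u $ i - w $ i)\<^sup>2)"
    by (rule sum_mono2) auto
  finally show ?thesis
    by (simp add: power2_norm_vec)
qed

theorem mainTheorem9:
  fixes D :: "((real^'d) \<times> real) measure"
    and \<mu> :: "'d \<Rightarrow> real"
    and lam eps :: real
    and w :: "nat \<Rightarrow> real^'d"
  assumes prob: "prob_space D"
    and sets_D: "sets D = sets borel"
    and labels: "AE p in D. snd p \<in> {-1, 1}"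
    and second_moments: "\<And>i. integrable D (\<lambda>p. (fst p $ i)\<^sup>2)"
    and A1: "\<And>i c. c \<in> {-1, 1} \<Longrightarrow> measure D (label_event D c) > 0 \<Longrightarrow>
               (\<integral>p. fst p $ i \<partial>(uniform_measure D (label_event D c))) = c * \<mu> i"
    and A2: "\<And>c. c \<in> {-1, 1} \<Longrightarrow> measure D (label_event D c) > 0 \<Longrightarrow>
               prob_space.indep_vars (uniform_measure D (label_event D c))
                 (\<lambda>_. borel) (\<lambda>i p. fst p $ i) UNIV"
    and lam_pos: "lam > 0"
    and eps_pos: "eps > 0"
    and AT: "\<And>t v. t \<ge> 1 \<Longrightarrow>
               U_obj D lam (AT_delta eps (w (t - 1))) (w t)
                 \<le> U_obj D lam (AT_delta eps (w (t - 1))) v"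
  shows "\<forall>t>0. (norm (w (t + 1) - w t))\<^sup>2 \<ge> (\<Sum>i\<in>{i. \<bar>\<mu> i\<bar> < eps}. (w t $ i)\<^sup>2)"
proof (intro allI impI sum_power2_le_norm_diff_if_opposite_signs)
  fix t i assume "i \<in> {i. \<bar>\<mu> i\<bar> < eps}"
  then show "w (t + 1) $ i * w t $ i \<le> 0"
    using AT[of "t + 1"]
    by (intro AT_minimizer_coordinate_sign[OF prob sets_D labels second_moments A1 A2 lam_pos]) auto
qed

end
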